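(* Let $R$ be a local $*$-ring. Then the following are equivalent: (1) $R$ is strongly $J$-$*$-clean. (2) $R$ is strongly $J$-clean. (3) $R$ is uniquely clean. (4) $R/J(R)\cong\mathbb{Z}_2$. (5) $1$ is not the sum of two units in $R$.
   Context: All rings are associative with identity. A $*$-ring is a ring $R$ with an involution $*$, i.e. a map $a\mapsto a^*$ with $(a+b)^*=a^*+b^*$, $(ab)^*=b^*a^*$, $(a^* )^*=a$. A ring is local if it has a unique maximal right ideal. $J(R)$ denotes the Jacobson radical of $R$. A projection is an element $e$ with $e^2=e=e^*$. $R$ is strongly $J$-$*$-clean if every $a\in R$ can be written $a=e+u$ with $e$ a projection, $u\in J(R)$ and $ae=ea$. $R$ is strongly $J$-clean if every $a\in R$ can be written $a=e+u$ with $e$ an idempotent, $u\in J(R)$ and $ae=ea$. $R$ is uniquely clean if every element of $R$ can be written uniquely as the sum of an idempotent and a unit. *)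

theory Defs
  imports "HOL-Algebra.Algebra"
begin

definition star_ring :: "('a, 'b) ring_scheme \<Rightarrow> ('a \<Rightarrow> 'a) \<Rightarrow> bool" where
  "star_ring R s \<longleftrightarrow> ring R \<and>
     (\<forall>a\<in>carrier R. s a \<in> carrier R) \<and>
     (\<forall>a\<in>carrier R. \<forall>b\<in>carrier R. s (a \<oplus>\<^bsub>R\<^esub> b) = s a \<oplus>\<^bsub>R\<^esub> s b) \<and>
     (\<forall>a\<in>carrier R. \<forall>b\<in>carrier R. s (a \<otimes>\<^bsub>R\<^esub> b) = s b \<otimes>\<^bsub>R\<^esub> s a) \<and>
     (\<forall>a\<in>carrier R. s (s a) = a)"

definition right_ideal :: "'a set \<Rightarrow> ('a, 'b) ring_scheme \<Rightarrow> bool" where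
  "right_ideal I R \<longleftrightarrow> additive_subgroup I R \<and>
     (\<forall>x\<in>I. \<forall>r\<in>carrier R. x \<otimes>\<^bsub>R\<^esub> r \<in> I)"

definition maximal_right_ideal :: "'a set \<Rightarrow> ('a, 'b) ring_scheme \<Rightarrow> bool" where
  "maximal_right_ideal M R \<longleftrightarrow> right_ideal M R \<and> M \<noteq> carrier R \<and>
     (\<forall>I. right_ideal I R \<longrightarrow> M \<subseteq> I \<longrightarrow> I = M \<or> I = carrier R)"

definition local_ring :: "('a, 'b) ring_scheme \<Rightarrow> bool" where
  "local_ring R \<longleftrightarrow> ring R \<and> (\<exists>!M. maximal_right_ideal M R)"

definition jacobson :: "('a, 'b) ring_scheme \<Rightarrow> 'a set" where
  "jacobson R = carrier R \<inter> \<Inter> {M. maximal_right_ideal M R}"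

definition is_projection :: "('a, 'b) ring_scheme \<Rightarrow> ('a \<Rightarrow> 'a) \<Rightarrow> 'a \<Rightarrow> bool" where
  "is_projection R s e \<longleftrightarrow> e \<in> carrier R \<and> e \<otimes>\<^bsub>R\<^esub> e = e \<and> s e = e"

definition is_idem :: "('a, 'b) ring_scheme \<Rightarrow> 'a \<Rightarrow> bool" where
  "is_idem R e \<longleftrightarrow> e \<in> carrier R \<and> e \<otimes>\<^bsub>R\<^esub> e = e"

definition strongly_J_star_clean :: "('a, 'b) ring_scheme \<Rightarrow> ('a \<Rightarrow> 'a) \<Rightarrow> bool" where
  "strongly_J_star_clean R s \<longleftrightarrow> (\<forall>a\<in>carrier R. \<exists>e u. is_projection R s e \<and>
      u \<in> jacobson R \<and> a = e \<oplus>\<^bsub>R\<^esub> u \<and> a \<otimes>\<^bsub>R\<^esub> e = e \<otimes>\<^bsub>R\<^esub> a)"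

definition strongly_J_clean :: "('a, 'b) ring_scheme \<Rightarrow> bool" where
  "strongly_J_clean R \<longleftrightarrow> (\<forall>a\<in>carrier R. \<exists>e u. is_idem R e \<and>
      u \<in> jacobson R \<and> a = e \<oplus>\<^bsub>R\<^esub> u \<and> a \<otimes>\<^bsub>R\<^esub> e = e \<otimes>\<^bsub>R\<^esub> a)"

definition uniquely_clean :: "('a, 'b) ring_scheme \<Rightarrow> bool" where
  "uniquely_clean R \<longleftrightarrow> (\<forall>a\<in>carrier R. \<exists>!p. is_idem R (fst p) \<and>
      snd p \<in> Units R \<and> a = fst p \<oplus>\<^bsub>R\<^esub> snd p)"

end

theory Submission
  imports Defs
begin

text \<open>In a local ring \<open>R\<close> with maximal right ideal \<open>M\<close>, an element is a unit iff it lies outside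
  \<open>M\<close> (a non-unit generates a proper right ideal, which Zorn puts inside the unique maximal one).
  Hence \<open>M\<close> is two-sided and equals \<open>J(R)\<close>, and the only idempotents are \<open>\<zero>\<close> and \<open>\<one>\<close>,
  which are projections for every involution. Each of the five conditions then says that every
  \<open>a\<close> is congruent to \<open>\<zero>\<close> or \<open>\<one>\<close> modulo \<open>M\<close>: the strongly \<open>J\<close>-clean decompositions of \<open>a\<close>
  are \<open>\<zero> \<oplus> a\<close> and \<open>\<one> \<oplus> (a \<ominus> \<one>)\<close>; the clean ones are the same with \<open>a\<close> resp.
  \<open>a \<ominus> \<one>\<close> a unit, so they are unique iff not both \<open>a\<close> and \<open>a \<ominus> \<one>\<close> are units, which is
  also what \<open>\<one> = a \<oplus> \<ominus> (a \<ominus> \<one>)\<close> being a sum of two units amounts to; and \<open>R/M \<cong> \<int>\<^sub>2\<close>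
  says that \<open>M\<close> and \<open>M +> \<one>\<close> are the only cosets.\<close>

context ring
begin

lemma mult_eq_zero_right_invertibleD:
  assumes "a \<in> carrier R" "b \<in> carrier R" "c \<in> carrier R"
    and "a \<otimes> b = \<zero>" and "b \<otimes> c = \<one>"
  shows "a = \<zero>"
proof -
  have "a = a \<otimes> (b \<otimes> c)" using assms by simp
  also have "\<dots> = (a \<otimes> b) \<otimes> c" using assms(1-3) by (simp add: m_assoc)
  also have "\<dots> = \<zero>" using assms by simp
  finally show ?thesis .
qed

lemma mult_eq_zero_left_invertibleD:
  assumes "a \<in> carrier R" "b \<in> carrier R" "c \<in> carrier R"
    and "b \<otimes> a = \<zero>" and "c \<otimes> b = \<one>"
  shows "a = \<zero>"
proof -
  have "a = (c \<otimes> b) \<otimes> a" using assms by simp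
  also have "\<dots> = c \<otimes> (b \<otimes> a)" using assms(1-3) by (simp add: m_assoc)
  also have "\<dots> = \<zero>" using assms by simp
  finally show ?thesis .
qed

lemma one_minus_mult_mult_eq_zero:
  assumes "a \<in> carrier R" "b \<in> carrier R" and "b \<otimes> a = \<one>"
  shows "(\<one> \<ominus> a \<otimes> b) \<otimes> a = \<zero>"
proof -
  have "(\<one> \<ominus> a \<otimes> b) \<otimes> a = a \<ominus> a \<otimes> (b \<otimes> a)"
    using assms(1,2) by (simp add: minus_eq l_distr l_minus m_assoc)
  also have "\<dots> = \<zero>" using assms by (simp add: minus_eq r_neg)
  finally show ?thesis .
qed

lemma mult_one_minus_mult_eq_zero:
  assumes "a \<in> carrier R" "b \<in> carrier R" and "a \<otimes> b = \<one>"
  shows "a \<otimes> (\<one> \<ominus> b \<otimes> a) = \<zero>"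
proof -
  have "a \<otimes> (\<one> \<ominus> b \<otimes> a) = a \<ominus> (a \<otimes> b) \<otimes> a"
    using assms(1,2) by (simp add: minus_eq r_distr r_minus m_assoc)
  also have "\<dots> = \<zero>" using assms by (simp add: minus_eq r_neg)
  finally show ?thesis .
qed

lemma right_ideal_principal:
  assumes x: "x \<in> carrier R"
  shows "right_ideal {x \<otimes> r | r. r \<in> carrier R} R"
  unfolding right_ideal_def
proof (intro conjI ballI additive_subgroupI add.subgroupI)
  let ?I = "{x \<otimes> r | r. r \<in> carrier R}"
  show "?I \<subseteq> carrier R" "?I \<noteq> {}" using x by auto
  show "\<ominus> a \<in> ?I" if a: "a \<in> ?I" for a
  proof -
    obtain r where "r \<in> carrier R" "a = x \<otimes> r" using a by blast
    then have "\<ominus> a = x \<otimes> \<ominus> r" using x by (simp add: r_minus)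
    then show ?thesis using \<open>r \<in> carrier R\<close> by blast
  qed
  show "a \<oplus> b \<in> ?I" if ab: "a \<in> ?I" "b \<in> ?I" for a b
  proof -
    obtain r r' where "r \<in> carrier R" "r' \<in> carrier R" "a = x \<otimes> r" "b = x \<otimes> r'"
      using ab by blast
    then have "a \<oplus> b = x \<otimes> (r \<oplus> r')" using x by (simp add: r_distr)
    then show ?thesis using \<open>r \<in> carrier R\<close> \<open>r' \<in> carrier R\<close> by blast
  qed
  show "a \<otimes> s \<in> ?I" if a: "a \<in> ?I" and s: "s \<in> carrier R" for a s
  proof -
    obtain r where "r \<in> carrier R" "a = x \<otimes> r" using a by blast
    then have "a \<otimes> s = x \<otimes> (r \<otimes> s)" using x s by (simp add: m_assoc)
    then show ?thesis using \<open>r \<in> carrier R\<close> \<open>s \<in> carrier R\<close> by blast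
  qed
qed

lemma right_ideal_chain_Union:
  assumes "C \<noteq> {}" and chain: "subset.chain {I. right_ideal I R} C"
  shows "right_ideal (\<Union>C) R"
  unfolding right_ideal_def
proof (intro conjI ballI additive_subgroupI add.subgroupI)
  have ri: "\<And>I. I \<in> C \<Longrightarrow> right_ideal I R"
    using chain unfolding subset_chain_def by blast
  then have sub: "\<And>I. I \<in> C \<Longrightarrow> additive_subgroup I R"
    unfolding right_ideal_def by blast
  show "\<Union>C \<subseteq> carrier R"
    using sub[THEN additive_subgroup.a_subset] by (simp add: Union_least)
  show "\<Union>C \<noteq> {}"
    using assms(1) sub[THEN additive_subgroup.zero_closed] by blast
  show "\<ominus> a \<in> \<Union>C" if "a \<in> \<Union>C" for a
    using that sub[THEN additive_subgroup.a_inv_closed] by blast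
  show "a \<otimes> r \<in> \<Union>C" if "a \<in> \<Union>C" "r \<in> carrier R" for a r
    using that ri unfolding right_ideal_def by (meson UnionE UnionI)
  show "a \<oplus> b \<in> \<Union>C" if ab: "a \<in> \<Union>C" "b \<in> \<Union>C" for a b
  proof -
    obtain I J where IJ: "I \<in> C" "J \<in> C" "a \<in> I" "b \<in> J" using ab by auto
    have "I \<subseteq> J \<or> J \<subseteq> I" using chain IJ(1,2) unfolding subset_chain_def by auto
    then obtain K where K: "K \<in> C" "a \<in> K" "b \<in> K" using IJ by auto
    have "a \<oplus> b \<in> K" using additive_subgroup.a_closed[OF sub[OF K(1)] K(2,3)] .
    then show ?thesis using K(1) by auto
  qed
qed

lemma right_ideal_eq_carrier:
  assumes "right_ideal I R" and "\<one> \<in> I"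
  shows "I = carrier R"
proof
  show "I \<subseteq> carrier R"
    using assms(1) additive_subgroup.a_subset unfolding right_ideal_def by blast
  show "carrier R \<subseteq> I"
  proof
    fix x assume x: "x \<in> carrier R"
    then have "\<one> \<otimes> x \<in> I" using assms unfolding right_ideal_def by blast
    then show "x \<in> I" using x by simp
  qed
qed

lemma right_ideal_subset_maximal:
  assumes "right_ideal I R" and "\<one> \<notin> I"
  obtains M where "maximal_right_ideal M R" and "I \<subseteq> M"
proof -
  define \<A> where "\<A> = {J. right_ideal J R \<and> \<one> \<notin> J \<and> I \<subseteq> J}"
  have "\<exists>M\<in>\<A>. \<forall>J\<in>\<A>. M \<subseteq> J \<longrightarrow> J = M"
  proof (rule subset_Zorn_nonempty)
    show "\<A> \<noteq> {}" using assms unfolding \<A>_def by blast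
    fix C assume C: "C \<noteq> {}" "subset.chain \<A> C"
    then have "C \<subseteq> \<A>" unfolding pred_on.chain_def by blast
    moreover have "subset.chain {J. right_ideal J R} C"
      using C(2) unfolding pred_on.chain_def \<A>_def by blast
    then have "right_ideal (\<Union>C) R" by (rule right_ideal_chain_Union[OF C(1)])
    ultimately show "\<Union>C \<in> \<A>" using C(1) unfolding \<A>_def by blast
  qed
  then obtain M where M: "M \<in> \<A>" and max: "\<And>J. J \<in> \<A> \<Longrightarrow> M \<subseteq> J \<Longrightarrow> J = M" by blast
  from M have M_props: "right_ideal M R" "\<one> \<notin> M" "I \<subseteq> M" unfolding \<A>_def by auto
  have "maximal_right_ideal M R"
    unfolding maximal_right_ideal_def
  proof (intro conjI allI impI)
    show "right_ideal M R" by (fact M_props(1))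
    show "M \<noteq> carrier R" using M_props(2) by auto
    fix J assume J: "right_ideal J R" "M \<subseteq> J"
    show "J = M \<or> J = carrier R"
    proof (cases "\<one> \<in> J")
      case True
      then show ?thesis using right_ideal_eq_carrier[OF J(1)] by blast
    next
      case False
      then have "J \<in> \<A>" using J M_props(3) unfolding \<A>_def by blast
      then show ?thesis using max J(2) by blast
    qed
  qed
  then show thesis using that M_props(3) by blast
qed

lemma star_ring_zero:
  assumes "star_ring R s"
  shows "s \<zero> = \<zero>"
proof -
  have closed: "s \<zero> \<in> carrier R" and "s (\<zero> \<oplus> \<zero>) = s \<zero> \<oplus> s \<zero>"
    using assms zero_closed unfolding star_ring_def by blast+
  then have "s \<zero> \<oplus> s \<zero> = s \<zero>" by simp
  then show ?thesis using closed by simp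
qed

lemma star_ring_one:
  assumes "star_ring R s"
  shows "s \<one> = \<one>"
proof -
  have closed: "s \<one> \<in> carrier R" and invol: "s (s \<one>) = \<one>"
    and anti: "\<And>a b. a \<in> carrier R \<Longrightarrow> b \<in> carrier R \<Longrightarrow> s (a \<otimes> b) = s b \<otimes> s a"
    using assms one_closed unfolding star_ring_def by blast+
  have "s \<one> = s \<one> \<otimes> s (s \<one>)" using closed invol by simp
  also have "\<dots> = s (s \<one> \<otimes> \<one>)" by (rule anti[OF closed one_closed, symmetric])
  also have "\<dots> = s (s \<one>)" using closed by simp
  also have "\<dots> = \<one>" using invol .
  finally show ?thesis .
qed

end

locale right_local_ring = ring R for R (structure) +
  fixes M
  assumes maximal_M: "maximal_right_ideal M R"
    and maximal_right_ideal_unique: "\<And>N. maximal_right_ideal N R \<Longrightarrow> N = M"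

lemma local_ring_imp_right_local_ring:
  assumes "local_ring R"
  obtains M where "right_local_ring R M"
  using assms unfolding local_ring_def right_local_ring_def right_local_ring_axioms_def
  by blast

context right_local_ring
begin

lemma right_ideal_M: "right_ideal M R"
  using maximal_M unfolding maximal_right_ideal_def by blast

sublocale M: additive_subgroup M R
  using right_ideal_M unfolding right_ideal_def by blast

lemma M_r_closed: "x \<in> M \<Longrightarrow> r \<in> carrier R \<Longrightarrow> x \<otimes> r \<in> M"
  using right_ideal_M unfolding right_ideal_def by blast

lemma M_carrier: "x \<in> M \<Longrightarrow> x \<in> carrier R"
  using M.a_subset by blast

lemma one_notin_M: "\<one> \<notin> M"
  using maximal_M right_ideal_eq_carrier[OF right_ideal_M]
  unfolding maximal_right_ideal_def by blast

lemma minus_in_M_iff: "x \<in> carrier R \<Longrightarrow> \<ominus> x \<in> M \<longleftrightarrow> x \<in> M"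
  using M.a_inv_closed by (metis minus_minus)

lemma add_notin_M:
  assumes "a \<in> M" and "b \<in> carrier R" and "b \<notin> M"
  shows "a \<oplus> b \<notin> M"
proof
  assume "a \<oplus> b \<in> M"
  then have "\<ominus> a \<oplus> (a \<oplus> b) \<in> M" using assms(1) by simp
  moreover have "\<ominus> a \<oplus> (a \<oplus> b) = b" using M_carrier[OF assms(1)] assms(2) by algebra
  ultimately show False using assms(3) by simp
qed

lemma one_minus_notin_M: "e \<in> M \<Longrightarrow> \<one> \<ominus> e \<notin> M"
  using add_notin_M[of "\<ominus> e" \<one>] one_notin_M M_carrier
  by (simp add: minus_eq a_comm)

lemma right_invertible_if_notin_M:
  assumes x: "x \<in> carrier R" "x \<notin> M"
  obtains y where "y \<in> carrier R" and "x \<otimes> y = \<one>"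
proof -
  let ?xR = "{x \<otimes> r | r. r \<in> carrier R}"
  have "\<one> \<in> ?xR"
  proof (rule ccontr)
    assume "\<one> \<notin> ?xR"
    then obtain N where "maximal_right_ideal N R" "?xR \<subseteq> N"
      using right_ideal_subset_maximal right_ideal_principal[OF x(1)] by blast
    moreover have "x \<otimes> \<one> \<in> ?xR" by blast
    then have "x \<in> ?xR" using x(1) by simp
    ultimately show False using x(2) maximal_right_ideal_unique by blast
  qed
  then obtain y where "y \<in> carrier R" "x \<otimes> y = \<one>" by auto
  then show thesis by (rule that)
qed

text \<open>A right inverse \<open>y\<close> of \<open>x \<notin> M\<close> is also a left inverse: if \<open>y \<notin> M\<close> then \<open>y\<close> is right
  invertible as well, and if \<open>y \<in> M\<close> then \<open>\<one> \<ominus> y \<otimes> x\<close> is right invertible while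
  \<open>x \<otimes> (\<one> \<ominus> y \<otimes> x) = \<zero>\<close>, forcing \<open>x = \<zero>\<close>.\<close>
lemma Units_if_notin_M:
  assumes x: "x \<in> carrier R" "x \<notin> M"
  shows "x \<in> Units R"
proof -
  obtain y where y: "y \<in> carrier R" "x \<otimes> y = \<one>"
    using right_invertible_if_notin_M[OF x] .
  have "y \<otimes> x = \<one>"
  proof (cases "y \<in> M")
    case False
    then obtain z where z: "z \<in> carrier R" "y \<otimes> z = \<one>"
      using right_invertible_if_notin_M y(1) by blast
    have "x = x \<otimes> (y \<otimes> z)" using x z by simp
    also have "\<dots> = (x \<otimes> y) \<otimes> z" using x(1) y(1) z(1) by (simp add: m_assoc)
    also have "\<dots> = z" using y(2) z(1) by simp
    finally have "x = z" .
    then show ?thesis using z(2) by simp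
  next
    case True
    have closed: "\<one> \<ominus> y \<otimes> x \<in> carrier R" using x(1) y(1) by simp
    moreover have "\<one> \<ominus> y \<otimes> x \<notin> M" using one_minus_notin_M[OF M_r_closed[OF True x(1)]] .
    ultimately obtain w where w: "w \<in> carrier R" "(\<one> \<ominus> y \<otimes> x) \<otimes> w = \<one>"
      by (rule right_invertible_if_notin_M)
    have "x \<otimes> (\<one> \<ominus> y \<otimes> x) = \<zero>" using mult_one_minus_mult_eq_zero x(1) y by blast
    then have "x = \<zero>"
      by (rule mult_eq_zero_right_invertibleD[OF x(1) closed w(1) _ w(2)])
    then show ?thesis using x(2) by simp
  qed
  then show ?thesis using x y unfolding Units_def by blast
qed

lemma Units_iff_notin_M: "x \<in> Units R \<longleftrightarrow> x \<in> carrier R \<and> x \<notin> M"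
proof
  assume x: "x \<in> Units R"
  have "x \<notin> M"
  proof
    assume "x \<in> M"
    then have "x \<otimes> inv x \<in> M" using M_r_closed Units_inv_closed[OF x] by blast
    then show False using x one_notin_M by simp
  qed
  then show "x \<in> carrier R \<and> x \<notin> M" using x Units_closed by blast
qed (use Units_if_notin_M in blast)

lemma unit_mult_eq_zeroD: "u \<in> Units R \<Longrightarrow> x \<in> carrier R \<Longrightarrow> u \<otimes> x = \<zero> \<Longrightarrow> x = \<zero>"
  using mult_eq_zero_left_invertibleD[of x u "inv u"] by (simp add: Units_closed)

text \<open>If \<open>a \<otimes> x\<close> were a unit for some \<open>x \<in> M\<close>, then \<open>x\<close> would have a left inverse \<open>b\<close>, and
  \<open>(\<one> \<ominus> x \<otimes> b) \<otimes> x = \<zero>\<close> with \<open>\<one> \<ominus> x \<otimes> b\<close> a unit.\<close>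
lemma M_l_closed:
  assumes x: "x \<in> M" and a: "a \<in> carrier R"
  shows "a \<otimes> x \<in> M"
proof (rule ccontr)
  assume "a \<otimes> x \<notin> M"
  have xc: "x \<in> carrier R" using M_carrier[OF x] .
  then have u: "a \<otimes> x \<in> Units R" using Units_iff_notin_M \<open>a \<otimes> x \<notin> M\<close> a by blast
  define b where "b = inv (a \<otimes> x) \<otimes> a"
  have b_closed: "b \<in> carrier R" unfolding b_def using u a by simp
  have "b \<otimes> x = inv (a \<otimes> x) \<otimes> (a \<otimes> x)"
    unfolding b_def by (rule m_assoc[OF Units_inv_closed[OF u] a xc])
  then have bx: "b \<otimes> x = \<one>" using Units_l_inv[OF u] by simp
  have "\<one> \<ominus> x \<otimes> b \<notin> M" using one_minus_notin_M[OF M_r_closed[OF x b_closed]] .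
  then have "\<one> \<ominus> x \<otimes> b \<in> Units R" using xc b_closed Units_iff_notin_M by simp
  moreover have "(\<one> \<ominus> x \<otimes> b) \<otimes> x = \<zero>" by (rule one_minus_mult_mult_eq_zero[OF xc b_closed bx])
  ultimately have "x = \<zero>" using unit_mult_eq_zeroD[OF _ xc] by blast
  then show False using \<open>a \<otimes> x \<notin> M\<close> a by simp
qed

lemma ideal_M: "ideal M R"
  by (intro idealI ring_axioms M.a_subgroup M_l_closed M_r_closed)

lemma jacobson_eq_M: "jacobson R = M"
  unfolding jacobson_def using maximal_M maximal_right_ideal_unique M.a_subset by blast

lemma is_idem_iff: "is_idem R e \<longleftrightarrow> e = \<zero> \<or> e = \<one>"
proof
  assume "is_idem R e"
  then have e: "e \<in> carrier R" "e \<otimes> e = e" unfolding is_idem_def by auto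
  have zero_r: "e \<otimes> (\<one> \<ominus> e) = \<zero>"
    using e by (simp add: minus_eq r_distr r_minus r_neg)
  have zero_l: "(\<one> \<ominus> e) \<otimes> e = \<zero>"
    using e by (simp add: minus_eq l_distr l_minus r_neg)
  show "e = \<zero> \<or> e = \<one>"
  proof (cases "e \<in> M")
    case True
    then have "\<one> \<ominus> e \<in> Units R" using Units_iff_notin_M one_minus_notin_M e(1) by simp
    then have "e = \<zero>" using unit_mult_eq_zeroD[OF _ e(1) zero_l] by blast
    then show ?thesis ..
  next
    case False
    then have "e \<in> Units R" using Units_iff_notin_M e(1) by simp
    then have "\<one> \<ominus> e = \<zero>" using unit_mult_eq_zeroD[OF _ _ zero_r] e(1) by simp
    then show ?thesis using e(1) by simp
  qed
qed (auto simp: is_idem_def)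

lemma is_projection_iff_is_idem:
  assumes "star_ring R s"
  shows "is_projection R s e \<longleftrightarrow> is_idem R e"
  using is_idem_iff star_ring_zero[OF assms] star_ring_one[OF assms]
  unfolding is_projection_def is_idem_def by auto


lemma strongly_J_star_clean_iff_strongly_J_clean:
  "star_ring R s \<Longrightarrow> strongly_J_star_clean R s \<longleftrightarrow> strongly_J_clean R"
  unfolding strongly_J_star_clean_def strongly_J_clean_def using is_projection_iff_is_idem by simp

definition zero_one_residues :: bool where
  "zero_one_residues \<longleftrightarrow> (\<forall>x\<in>carrier R. x \<in> M \<or> x \<ominus> \<one> \<in> M)"

lemma minus_one_notin_M:
  assumes "x \<in> M"
  shows "x \<ominus> \<one> \<notin> M"
proof
  assume "x \<ominus> \<one> \<in> M"
  then have "x \<oplus> \<ominus> (x \<ominus> \<one>) \<in> M" using assms by simp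
  moreover have "x \<oplus> \<ominus> (x \<ominus> \<one>) = \<one>" using M_carrier[OF assms] by algebra
  ultimately show False using one_notin_M by simp
qed

lemma strongly_J_clean_iff: "strongly_J_clean R \<longleftrightarrow> zero_one_residues"
proof
  assume clean: "strongly_J_clean R"
  show zero_one_residues unfolding zero_one_residues_def
  proof
    fix a assume a: "a \<in> carrier R"
    then obtain e u where eu: "is_idem R e" "u \<in> M" "a = e \<oplus> u"
      using clean jacobson_eq_M unfolding strongly_J_clean_def by blast
    have u: "u \<in> carrier R" using M_carrier[OF eu(2)] .
    from eu(1) have "e = \<zero> \<or> e = \<one>" by (simp add: is_idem_iff)
    then show "a \<in> M \<or> a \<ominus> \<one> \<in> M"
    proof
      assume "e = \<zero>"
      then show ?thesis using eu u by simp
    next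
      assume "e = \<one>"
      then have "a \<ominus> \<one> = u" using eu(3) u by simp algebra
      then show ?thesis using eu(2) by simp
    qed
  qed
next
  assume residues: zero_one_residues
  show "strongly_J_clean R" unfolding strongly_J_clean_def
  proof
    fix a assume a: "a \<in> carrier R"
    show "\<exists>e u. is_idem R e \<and> u \<in> jacobson R \<and> a = e \<oplus> u \<and> a \<otimes> e = e \<otimes> a"
    proof (cases "a \<in> M")
      case True
      then show ?thesis using a jacobson_eq_M
        by (intro exI[of _ \<zero>] exI[of _ a]) (simp add: is_idem_iff)
    next
      case False
      then have "a \<ominus> \<one> \<in> M" using residues a unfolding zero_one_residues_def by blast
      moreover have "a = \<one> \<oplus> (a \<ominus> \<one>)" using a by algebra
      ultimately show ?thesis using a jacobson_eq_M
        by (intro exI[of _ \<one>] exI[of _ "a \<ominus> \<one>"]) (simp add: is_idem_iff)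
    qed
  qed
qed

lemma clean_decomposition_iff:
  assumes a: "a \<in> carrier R"
  shows "(is_idem R (fst p) \<and> snd p \<in> Units R \<and> a = fst p \<oplus> snd p) \<longleftrightarrow>
     (p = (\<zero>, a) \<and> a \<notin> M) \<or> (p = (\<one>, a \<ominus> \<one>) \<and> a \<ominus> \<one> \<notin> M)"
proof (cases p)
  case (Pair e v)
  show ?thesis
  proof
    assume "is_idem R (fst p) \<and> snd p \<in> Units R \<and> a = fst p \<oplus> snd p"
    then have e: "e = \<zero> \<or> e = \<one>" and v: "v \<in> carrier R" "v \<notin> M" and av: "a = e \<oplus> v"
      using Pair is_idem_iff Units_iff_notin_M by auto
    from e show "(p = (\<zero>, a) \<and> a \<notin> M) \<or> (p = (\<one>, a \<ominus> \<one>) \<and> a \<ominus> \<one> \<notin> M)"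
    proof
      assume "e = \<zero>"
      then show ?thesis using Pair v av by simp
    next
      assume e1: "e = \<one>"
      have "(\<one> \<oplus> v) \<ominus> \<one> = v" using v(1) by algebra
      then have "a \<ominus> \<one> = v" using av e1 by simp
      then show ?thesis using Pair v e1 by simp
    qed
  next
    assume "(p = (\<zero>, a) \<and> a \<notin> M) \<or> (p = (\<one>, a \<ominus> \<one>) \<and> a \<ominus> \<one> \<notin> M)"
    then show "is_idem R (fst p) \<and> snd p \<in> Units R \<and> a = fst p \<oplus> snd p"
    proof
      assume "p = (\<zero>, a) \<and> a \<notin> M"
      then show ?thesis using a Units_iff_notin_M is_idem_iff by simp
    next
      assume p: "p = (\<one>, a \<ominus> \<one>) \<and> a \<ominus> \<one> \<notin> M"
      have "a = \<one> \<oplus> (a \<ominus> \<one>)" using a by algebra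
      then show ?thesis using p a Units_iff_notin_M is_idem_iff by simp
    qed
  qed
qed

lemma uniquely_clean_iff: "uniquely_clean R \<longleftrightarrow> zero_one_residues"
proof
  assume unique: "uniquely_clean R"
  show zero_one_residues unfolding zero_one_residues_def
  proof (intro ballI, rule ccontr)
    fix a assume a: "a \<in> carrier R" and both: "\<not> (a \<in> M \<or> a \<ominus> \<one> \<in> M)"
    have "\<exists>!p. is_idem R (fst p) \<and> snd p \<in> Units R \<and> a = fst p \<oplus> snd p"
      using unique a unfolding uniquely_clean_def by blast
    then have "\<exists>!p. (p = (\<zero>, a) \<and> a \<notin> M) \<or> (p = (\<one>, a \<ominus> \<one>) \<and> a \<ominus> \<one> \<notin> M)"
      using clean_decomposition_iff[OF a] by simp
    then have "(\<zero>, a) = (\<one>, a \<ominus> \<one>)" using both by (metis (no_types, lifting))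
    then show False using one_notin_M M.zero_closed by auto
  qed
next
  assume residues: zero_one_residues
  show "uniquely_clean R" unfolding uniquely_clean_def
  proof
    fix a assume a: "a \<in> carrier R"
    have "\<exists>!p. (p = (\<zero>, a) \<and> a \<notin> M) \<or> (p = (\<one>, a \<ominus> \<one>) \<and> a \<ominus> \<one> \<notin> M)"
    proof (cases "a \<in> M")
      case True
      then show ?thesis using minus_one_notin_M by auto
    next
      case False
      then have "a \<ominus> \<one> \<in> M" using residues a unfolding zero_one_residues_def by blast
      then show ?thesis using False by auto
    qed
    then show "\<exists>!p. is_idem R (fst p) \<and> snd p \<in> Units R \<and> a = fst p \<oplus> snd p"
      using clean_decomposition_iff[OF a] by simp
  qed
qed

lemma not_sum_of_two_units_iff:
  "\<not> (\<exists>u\<in>Units R. \<exists>v\<in>Units R. \<one> = u \<oplus> v) \<longleftrightarrow> zero_one_residues"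
proof
  assume no_sum: "\<not> (\<exists>u\<in>Units R. \<exists>v\<in>Units R. \<one> = u \<oplus> v)"
  show zero_one_residues unfolding zero_one_residues_def
  proof (intro ballI, rule ccontr)
    fix a assume a: "a \<in> carrier R" and both: "\<not> (a \<in> M \<or> a \<ominus> \<one> \<in> M)"
    have "\<one> = a \<oplus> \<ominus> (a \<ominus> \<one>)" using a by algebra
    moreover have "a \<in> Units R" "\<ominus> (a \<ominus> \<one>) \<in> Units R"
      using a both minus_in_M_iff Units_iff_notin_M by auto
    ultimately show False using no_sum by blast
  qed
next
  assume residues: zero_one_residues
  show "\<not> (\<exists>u\<in>Units R. \<exists>v\<in>Units R. \<one> = u \<oplus> v)"
  proof
    assume "\<exists>u\<in>Units R. \<exists>v\<in>Units R. \<one> = u \<oplus> v"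
    then obtain u v where uv: "u \<in> Units R" "v \<in> Units R" "\<one> = u \<oplus> v" by blast
    then have u: "u \<in> carrier R" "u \<notin> M" and v: "v \<in> carrier R" "v \<notin> M"
      using Units_iff_notin_M by auto
    then have "u \<ominus> \<one> \<in> M" using residues unfolding zero_one_residues_def by blast
    then have "\<ominus> (u \<ominus> \<one>) \<in> M" by simp
    moreover have "\<ominus> (u \<ominus> (u \<oplus> v)) = v" using u(1) v(1) by algebra
    ultimately show False using uv(3) v(2) by simp
  qed
qed

lemma one_plus_one_in_M:
  assumes zero_one_residues
  shows "\<one> \<oplus> \<one> \<in> M"
proof -
  have "\<ominus> \<one> \<notin> M" using minus_in_M_iff one_notin_M by simp
  moreover have "\<ominus> \<one> \<in> carrier R" by simp
  ultimately have "\<ominus> \<one> \<ominus> \<one> \<in> M" using assms unfolding zero_one_residues_def by blast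
  then have "\<ominus> (\<ominus> \<one> \<ominus> \<one>) \<in> M" by simp
  moreover have "\<ominus> (\<ominus> \<one> \<ominus> \<one>) = \<one> \<oplus> \<one>" by algebra
  ultimately show ?thesis by simp
qed

lemma add_notin_M_notin_M:
  assumes zero_one_residues
    and a: "a \<in> carrier R" "a \<notin> M" and b: "b \<in> carrier R" "b \<notin> M"
  shows "a \<oplus> b \<in> M"
proof -
  have "a \<ominus> \<one> \<in> M" "b \<ominus> \<one> \<in> M"
    using assms unfolding zero_one_residues_def by auto
  then have "(a \<ominus> \<one>) \<oplus> (b \<ominus> \<one>) \<oplus> (\<one> \<oplus> \<one>) \<in> M"
    using one_plus_one_in_M[OF assms(1)] by simp
  moreover have "(a \<ominus> \<one>) \<oplus> (b \<ominus> \<one>) \<oplus> (\<one> \<oplus> \<one>) = a \<oplus> b" using a(1) b(1) by algebra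
  ultimately show ?thesis by simp
qed

lemma mult_in_M_iff:
  assumes "a \<in> carrier R" "b \<in> carrier R"
  shows "a \<otimes> b \<in> M \<longleftrightarrow> a \<in> M \<or> b \<in> M"
proof
  assume "a \<otimes> b \<in> M"
  then show "a \<in> M \<or> b \<in> M" using assms Units_iff_notin_M Units_m_closed by blast
next
  assume "a \<in> M \<or> b \<in> M"
  then show "a \<otimes> b \<in> M" using M_r_closed M_l_closed assms by blast
qed

end

lemma ZMod_2_ring_hom: "ZMod 2 \<in> ring_hom \<Z> (ZFact 2)"
proof -
  have "ideal (Idl\<^bsub>\<Z>\<^esub> {2}) \<Z>" by (rule int.genideal_ideal) simp
  then show ?thesis using ideal.rcos_ring_hom unfolding ZFact_def ZMod_def by blast
qed

lemma ring_ZFact: "ring (ZFact k)"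
  using ZFact_is_cring cring.axioms(1) by blast

lemma ZFact_2_zero: "\<zero>\<^bsub>ZFact 2\<^esub> = ZMod 2 0"
  using ring_hom_zero[OF ZMod_2_ring_hom int.ring_axioms ring_ZFact] by simp

lemma ZFact_2_one: "\<one>\<^bsub>ZFact 2\<^esub> = ZMod 2 1"
  using ring_hom_one[OF ZMod_2_ring_hom] by simp

lemma ZFact_2_zero_neq_one: "\<zero>\<^bsub>ZFact 2\<^esub> \<noteq> \<one>\<^bsub>ZFact 2\<^esub>"
  unfolding ZFact_2_zero ZFact_2_one ZMod_eq_mod by simp

lemma ZFact_2_carrier: "carrier (ZFact 2) = {\<zero>\<^bsub>ZFact 2\<^esub>, \<one>\<^bsub>ZFact 2\<^esub>}"
proof
  show "carrier (ZFact 2) \<subseteq> {\<zero>\<^bsub>ZFact 2\<^esub>, \<one>\<^bsub>ZFact 2\<^esub>}"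
  proof
    fix Y assume "Y \<in> carrier (ZFact 2)"
    then obtain n where "Y = ZMod 2 n"
      unfolding ZFact_def FactRing_def A_RCOSETS_def RCOSETS_def ZMod_def a_r_coset_def by auto
    moreover have "n mod 2 = 0 mod 2 \<or> n mod 2 = 1 mod 2" by auto
    ultimately show "Y \<in> {\<zero>\<^bsub>ZFact 2\<^esub>, \<one>\<^bsub>ZFact 2\<^esub>}"
      unfolding ZFact_2_zero ZFact_2_one by (auto simp: ZMod_eq_mod)
  qed
  show "{\<zero>\<^bsub>ZFact 2\<^esub>, \<one>\<^bsub>ZFact 2\<^esub>} \<subseteq> carrier (ZFact 2)"
    using ring.ring_simprules(2,6)[OF ring_ZFact] by auto
qed

lemma ZFact_2_card: "card (carrier (ZFact 2)) = 2"
  unfolding ZFact_2_carrier using ZFact_2_zero_neq_one by simp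

lemma ZFact_2_one_plus_one: "\<one>\<^bsub>ZFact 2\<^esub> \<oplus>\<^bsub>ZFact 2\<^esub> \<one>\<^bsub>ZFact 2\<^esub> = \<zero>\<^bsub>ZFact 2\<^esub>"
proof -
  interpret Z: ring "ZFact 2" by (rule ring_ZFact)
  have "\<one>\<^bsub>ZFact 2\<^esub> \<oplus>\<^bsub>ZFact 2\<^esub> \<one>\<^bsub>ZFact 2\<^esub> \<noteq> \<one>\<^bsub>ZFact 2\<^esub>"
    using ZFact_2_zero_neq_one by simp
  moreover have "\<one>\<^bsub>ZFact 2\<^esub> \<oplus>\<^bsub>ZFact 2\<^esub> \<one>\<^bsub>ZFact 2\<^esub> \<in> carrier (ZFact 2)" by simp
  ultimately show ?thesis unfolding ZFact_2_carrier by blast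
qed

context right_local_ring
begin

definition residue_indicator :: "'a \<Rightarrow> int set" where
  "residue_indicator x = (if x \<in> M then \<zero>\<^bsub>ZFact 2\<^esub> else \<one>\<^bsub>ZFact 2\<^esub>)"

lemma residue_indicator_ring_hom:
  assumes zero_one_residues
  shows "residue_indicator \<in> ring_hom R (ZFact 2)"
proof (rule ring_hom_memI)
  interpret Z: ring "ZFact 2" by (rule ring_ZFact)
  show "residue_indicator x \<in> carrier (ZFact 2)" for x
    unfolding residue_indicator_def by simp
  show "residue_indicator (x \<otimes> y) = residue_indicator x \<otimes>\<^bsub>ZFact 2\<^esub> residue_indicator y"
    if "x \<in> carrier R" "y \<in> carrier R" for x y
    unfolding residue_indicator_def using mult_in_M_iff[OF that] by auto
  show "residue_indicator (x \<oplus> y) = residue_indicator x \<oplus>\<^bsub>ZFact 2\<^esub> residue_indicator y"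
    if xy: "x \<in> carrier R" "y \<in> carrier R" for x y
  proof (cases "x \<in> M"; cases "y \<in> M")
    assume "x \<in> M" "y \<in> M"
    then show ?thesis unfolding residue_indicator_def by simp
  next
    assume "x \<in> M" "y \<notin> M"
    then show ?thesis unfolding residue_indicator_def using add_notin_M xy by simp
  next
    assume "x \<notin> M" "y \<in> M"
    then have "y \<oplus> x \<notin> M" using add_notin_M xy by blast
    then show ?thesis unfolding residue_indicator_def using \<open>x \<notin> M\<close> \<open>y \<in> M\<close> xy
      by (simp add: a_comm)
  next
    assume "x \<notin> M" "y \<notin> M"
    then show ?thesis unfolding residue_indicator_def
      using add_notin_M_notin_M[OF assms] xy ZFact_2_one_plus_one by simp
  qed
  show "residue_indicator \<one> = \<one>\<^bsub>ZFact 2\<^esub>"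
    unfolding residue_indicator_def using one_notin_M by simp
qed

lemma quotient_iso_ZFact_2_if_zero_one_residues:
  assumes zero_one_residues
  shows "R Quot M \<simeq> ZFact 2"
proof -
  have hom: "ring_hom_ring R (ZFact 2) residue_indicator"
    by (rule ring_hom_ringI2[OF ring_axioms ring_ZFact residue_indicator_ring_hom[OF assms]])
  have "residue_indicator \<zero> = \<zero>\<^bsub>ZFact 2\<^esub>" "residue_indicator \<one> = \<one>\<^bsub>ZFact 2\<^esub>"
    unfolding residue_indicator_def using one_notin_M by simp_all
  then have surj: "residue_indicator ` carrier R = carrier (ZFact 2)"
    unfolding ZFact_2_carrier residue_indicator_def by force
  have "a_kernel R (ZFact 2) residue_indicator = M"
    unfolding a_kernel_def' residue_indicator_def using ZFact_2_zero_neq_one M.a_subset by auto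
  then show ?thesis using ring_hom_ring.FactRing_iso[OF hom surj] by simp
qed

text \<open>A ring isomorphic to \<open>ZFact 2\<close> has two elements, so the cosets of \<open>M\<close> are exactly
  \<open>M\<close> and \<open>M +> \<one>\<close>.\<close>
lemma zero_one_residues_if_quotient_iso_ZFact_2:
  assumes "R Quot M \<simeq> ZFact 2"
  shows zero_one_residues
proof -
  interpret I: ideal M R by (rule ideal_M)
  have coset_closed: "M +> x \<in> carrier (R Quot M)" if "x \<in> carrier R" for x
    using ring_hom_closed[OF I.rcos_ring_hom that] .
  obtain \<phi> where "\<phi> \<in> ring_iso (R Quot M) (ZFact 2)"
    using assms unfolding is_ring_iso_def by blast
  then have "bij_betw \<phi> (carrier (R Quot M)) (carrier (ZFact 2))"
    unfolding ring_iso_def by simp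
  then have "card (carrier (R Quot M)) = 2"
    using ZFact_2_card by (simp add: bij_betw_same_card)
  moreover have "{M, M +> \<one>} \<subseteq> carrier (R Quot M)"
    using coset_closed[OF zero_closed] coset_closed[OF one_closed] a_rcos_zero[OF ideal_M M.zero_closed]
    by simp
  moreover have "M +> \<one> \<noteq> M" using I.a_rcos_self[OF one_closed] one_notin_M by auto
  ultimately have cosets: "carrier (R Quot M) = {M, M +> \<one>}"
    by (metis card.infinite card_2_iff card_subset_eq zero_neq_numeral)
  show ?thesis unfolding zero_one_residues_def
  proof
    fix x assume x: "x \<in> carrier R"
    have "M +> x = M \<or> M +> x = M +> \<one>" using cosets coset_closed[OF x] by simp
    then show "x \<in> M \<or> x \<ominus> \<one> \<in> M"
    proof
      assume "M +> x = M"
      then show ?thesis using I.a_rcos_self[OF x] by simp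
    next
      assume "M +> x = M +> \<one>"
      then have "x \<in> M +> \<one>" using I.a_rcos_self[OF x] by simp
      then show ?thesis using I.a_rcos_module_minus[OF ring_axioms one_closed x] by simp
    qed
  qed
qed

lemma quotient_iso_ZFact_2_iff: "R Quot M \<simeq> ZFact 2 \<longleftrightarrow> zero_one_residues"
  using quotient_iso_ZFact_2_if_zero_one_residues zero_one_residues_if_quotient_iso_ZFact_2 by blast

end

theorem corollary2p8:
  fixes R :: "('a, 'b) ring_scheme" and s :: "'a \<Rightarrow> 'a"
  assumes "star_ring R s" and "local_ring R"
  shows "(strongly_J_star_clean R s \<longleftrightarrow> strongly_J_clean R) \<and>
         (strongly_J_clean R \<longleftrightarrow> uniquely_clean R) \<and>
         (uniquely_clean R \<longleftrightarrow> R Quot (jacobson R) \<simeq> ZFact 2) \<and>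
         (R Quot (jacobson R) \<simeq> ZFact 2 \<longleftrightarrow>
            \<not> (\<exists>u\<in>Units R. \<exists>v\<in>Units R. \<one>\<^bsub>R\<^esub> = u \<oplus>\<^bsub>R\<^esub> v))"
proof -
  obtain M where "right_local_ring R M"
    using assms(2) by (rule local_ring_imp_right_local_ring)
  then interpret right_local_ring R M .
  show ?thesis
    unfolding jacobson_eq_M
    using strongly_J_star_clean_iff_strongly_J_clean[OF assms(1)] strongly_J_clean_iff
      uniquely_clean_iff quotient_iso_ZFact_2_iff not_sum_of_two_units_iff
    by blast
qed

end
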